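(* Let $m,n\ge 1$. For $i=1,\ldots,m$ let $f_i:\mathbb{R}^n\to\mathbb{R}$ be convex and let $h_i:\mathbb{R}^n\to\mathbb{R}$ be convex and differentiable with $\nabla h_i$ Lipschitz continuous with constant $L_i>0$; put $F_i:=f_i+h_i$ and $F:=\sum_{i=1}^m F_i$. Let $g:\mathbb{R}^n\to\mathbb{R}$ be convex and differentiable with $\nabla g$ Lipschitz continuous with constant $L_g>0$, and assume $\min g=0$. Let $\mathcal{S}$ be the solution set of the problem $\min\{F(x): x\in\arg\min g\}$, and assume $\mathcal{S}\neq\emptyset$. Let $(\alpha_k)_{k\ge1}$, $(\beta_k)_{k\ge1}$ be positive sequences, $x_1\in\mathbb{R}^n$ arbitrary, and for $k\ge1$ define $$\varphi_{1,k}:=x_k-\alpha_k\beta_k\nabla g(x_k),\qquad \varphi_{i+1,k}:=\operatorname{prox}_{\alpha_k f_i}\big(\varphi_{i,k}-\alpha_k\nabla h_i(\varphi_{i,k})\big)\ (i=1,\ldots,m),\qquad x_{k+1}:=\varphi_{m+1,k}.$$ Assume: (H1) $\partial\big(\sum_{i=1}^m f_i+\delta_{\arg\min g}\big)=\sum_{i=1}^m\partial f_i+N_{\arg\min g}$; (H2) $\sum_{k=1}^\infty\alpha_k=+\infty$ and $\sum_{k=1}^\infty\alpha_k^2<+\infty$; (H3) $0<\liminf_{k\to\infty}\alpha_k\beta_k\le\limsup_{k\to\infty}\alpha_k\beta_k<\frac{2}{L_g}$; (H4) for every $p\in\operatorname{ran}(N_{\arg\min g})$, $\sum_{k=1}^\infty\alpha_k\beta_k\Big[g^*\big(\tfrac{p}{\beta_k}\big)-\sigma_{\arg\min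 g}\big(\tfrac{p}{\beta_k}\big)\Big]<+\infty$. Then the sequence $(x_k)_{k\ge1}$ converges to a point in $\mathcal{S}$.
   Context: For $r>0$ and convex $f:\mathbb{R}^n\to\mathbb{R}$, $\operatorname{prox}_{rf}(x)$ is the unique minimizer of $u\mapsto f(u)+\frac{1}{2r}\|u-x\|^2$. $g^*(u)=\sup_x\{\langle u,x\rangle-g(x)\}$ is the Fenchel conjugate. For a nonempty set $X$, $\delta_X$ is its indicator function ($0$ on $X$, $+\infty$ otherwise), $N_X(x)=\{u:\langle u,y-x\rangle\le0\ \forall y\in X\}$ for $x\in X$ (empty otherwise) is the normal cone, $\operatorname{ran}(N_X)=\bigcup_{x\in X}N_X(x)$, and $\sigma_X(u)=\sup_{y\in X}\langle y,u\rangle$ is the support function. $\partial$ denotes the convex subdifferential. *)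

theory Defs
  imports "HOL-Analysis.Analysis"
begin

definition argmin_set :: "('a \<Rightarrow> real) \<Rightarrow> 'a set" where
  "argmin_set g = {x. \<forall>y. g x \<le> g y}"

text \<open>Proximal operator: the (unique, for convex f and r > 0) minimizer of
  u \<mapsto> f u + 1/(2r) |u - x|^2.\<close>
definition prox :: "real \<Rightarrow> ('a::real_normed_vector \<Rightarrow> real) \<Rightarrow> 'a \<Rightarrow> 'a" where
  "prox r f x = (THE u. \<forall>v. f u + (norm (u - x))\<^sup>2 / (2 * r) \<le> f v + (norm (v - x))\<^sup>2 / (2 * r))"

definition fenchel_conj :: "('a::real_inner \<Rightarrow> real) \<Rightarrow> 'a \<Rightarrow> ereal" where
  "fenchel_conj g u = (SUP x. ereal (inner u x - g x))"

definition support_fun :: "'a::real_inner set \<Rightarrow> 'a \<Rightarrow> ereal" where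
  "support_fun X u = (SUP y\<in>X. ereal (inner y u))"

definition indicator_fun :: "'a set \<Rightarrow> 'a \<Rightarrow> ereal" where
  "indicator_fun X x = (if x \<in> X then 0 else \<infinity>)"

definition normal_cone :: "'a::real_inner set \<Rightarrow> 'a \<Rightarrow> 'a set" where
  "normal_cone X x = (if x \<in> X then {u. \<forall>y\<in>X. inner u (y - x) \<le> 0} else {})"

definition normal_cone_range :: "'a::real_inner set \<Rightarrow> 'a set" where
  "normal_cone_range X = (\<Union>x\<in>X. normal_cone X x)"

definition subdiff :: "('a::real_inner \<Rightarrow> ereal) \<Rightarrow> 'a \<Rightarrow> 'a set" where
  "subdiff f x = {u. f x \<noteq> \<infinity> \<and> (\<forall>y. f x + ereal (inner u (y - x)) \<le> f y)}"

end

(* Fix a solution z. The gradient step on the penalty g followed by the m forward-backward steps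
   gives the quasi-Fejer inequality
     |x_(k+1) - z|^2
       <= |x_k - z|^2 - 2 theta gamma_k g(x_k) - 2 alpha_k (F(phi_k) - F(z)) - theta/2 D_k
   for large k, where gamma_k = alpha_k beta_k, F(phi_k) evaluates each F_i at the output of its own
   prox step and D_k is the sum of the squared lengths of the inner steps. The optimality condition
   at z, split by (H1) into subgradients of the f_i and a normal vector p to argmin g, bounds the
   middle term from below: the p-part by the Fenchel-Young inequality for g, whose error is summable
   by (H4), and the remaining inner products by Young's inequality and sum alpha_k^2 < infinity.
   Hence |x_k - z| converges, g(x_k) -> 0, D_k -> 0 and, as sum alpha_k = infinity,
   liminf F(phi_k) <= F(z). A cluster point of (x_k) along a subsequence realising this liminf is
   therefore a solution, and since the distance to it converges, the whole sequence converges
   to it. *)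

theory Submission
  imports Defs
begin

section \<open>Inner products, gradients and convexity\<close>

lemma inner_le_young:
  fixes u v :: "'a::real_inner"
  assumes "d > 0"
  shows "2 * inner u v \<le> (norm u)\<^sup>2 / d + d * (norm v)\<^sup>2"
proof -
  have "0 \<le> (norm (u - d *\<^sub>R v))\<^sup>2 / d" using assms by simp
  also have "\<dots> = (norm u)\<^sup>2 / d - 2 * inner u v + d * (norm v)\<^sup>2"
    using assms unfolding power2_norm_eq_inner
    by (simp add: inner_diff_left inner_diff_right inner_commute field_simps power2_eq_square)
  finally show ?thesis by simp
qed

lemma gderiv_along_line:
  fixes f :: "'a::real_inner \<Rightarrow> real"
  assumes "GDERIV f (x + t *\<^sub>R v) :> D"
  shows "((\<lambda>s. f (x + s *\<^sub>R v)) has_real_derivative inner v D) (at t)"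
proof -
  have "((\<lambda>s. x + s *\<^sub>R v) has_derivative (\<lambda>s. s *\<^sub>R v)) (at t)"
    by (auto intro!: derivative_eq_intros)
  from has_derivative_compose[OF this assms[unfolded gderiv_def]]
  show ?thesis
    unfolding has_field_derivative_def by (rule has_derivative_eq_rhs) (auto simp: fun_eq_iff)
qed

lemma DERIV_ge_right_slope:
  fixes \<psi> :: "real \<Rightarrow> real"
  assumes "(\<psi> has_real_derivative D) (at 0)"
    and "\<And>t. 0 < t \<Longrightarrow> t < 1 \<Longrightarrow> c * t \<le> \<psi> t - \<psi> 0"
  shows "c \<le> D"
proof (rule tendsto_lowerbound)
  show "((\<lambda>t. (\<psi> t - \<psi> 0) / t) \<longlongrightarrow> D) (at_right 0)"
    using assms(1) unfolding DERIV_def by (simp add: filterlim_at_split)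
  have "\<forall>\<^sub>F t in at_right 0. 0 < t \<and> t < (1::real)"
    by (simp add: eventually_at_right_field) (metis zero_less_one)
  then show "\<forall>\<^sub>F t in at_right 0. c \<le> (\<psi> t - \<psi> 0) / t"
    by eventually_elim (use assms(2) in \<open>auto simp: pos_le_divide_eq\<close>)
qed simp

lemma convex_on_gderiv_tangent_le:
  fixes f :: "'a::real_inner \<Rightarrow> real"
  assumes "convex_on UNIV f" and "GDERIV f x :> D"
  shows "f x + inner D (y - x) \<le> f y"
proof -
  have "((\<lambda>t. - f (x + t *\<^sub>R (y - x))) has_real_derivative - inner (y - x) D) (at 0)"
    using gderiv_along_line[of f x 0 "y - x" D] assms(2) by (auto intro!: derivative_eq_intros)
  moreover have "(f x - f y) * t \<le> - f (x + t *\<^sub>R (y - x)) - - f (x + 0 *\<^sub>R (y - x))"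
    if "0 < t" "t < 1" for t
  proof -
    have "f (x + t *\<^sub>R (y - x)) = f ((1 - t) *\<^sub>R x + t *\<^sub>R y)"
      by (simp add: algebra_simps)
    also have "\<dots> \<le> (1 - t) * f x + t * f y"
      using that by (intro convex_onD[OF assms(1)]) auto
    finally show ?thesis by (simp add: algebra_simps)
  qed
  ultimately have "f x - f y \<le> - inner (y - x) D"
    by (rule DERIV_ge_right_slope)
  then show ?thesis by (simp add: inner_commute)
qed

lemma min_convex_plus_smooth_imp_variational_ineq:
  fixes F H :: "'a::real_inner \<Rightarrow> real"
  assumes "convex A" "convex_on A F" "GDERIV H z :> D" "z \<in> A"
    and min: "\<And>y. y \<in> A \<Longrightarrow> F z + H z \<le> F y + H y"
    and "y \<in> A"
  shows "F z \<le> F y + inner D (y - z)"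
proof -
  have "((\<lambda>t. H (z + t *\<^sub>R (y - z))) has_real_derivative inner (y - z) D) (at 0)"
    using gderiv_along_line[of H z 0 "y - z" D] assms(3) by simp
  moreover have "(F z - F y) * t \<le> H (z + t *\<^sub>R (y - z)) - H (z + 0 *\<^sub>R (y - z))"
    if "0 < t" "t < 1" for t
  proof -
    have seg: "z + t *\<^sub>R (y - z) = (1 - t) *\<^sub>R z + t *\<^sub>R y"
      by (simp add: algebra_simps)
    have "F (z + t *\<^sub>R (y - z)) \<le> (1 - t) * F z + t * F y"
      unfolding seg using that assms by (intro convex_onD) auto
    moreover have "z + t *\<^sub>R (y - z) \<in> A"
      unfolding seg using that assms by (intro convexD) auto
    ultimately show ?thesis
      using min[of "z + t *\<^sub>R (y - z)"] by (simp add: algebra_simps)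
  qed
  ultimately have "F z - F y \<le> inner (y - z) D"
    by (rule DERIV_ge_right_slope)
  then show ?thesis by (simp add: inner_commute)
qed

lemma convex_on_sum_fun:
  assumes "finite I" "convex S" "\<And>i. i \<in> I \<Longrightarrow> convex_on S (f i)"
  shows "convex_on S (\<lambda>x. \<Sum>i\<in>I. f i x)"
  using assms by (induction I rule: finite_induct) (auto simp: convex_on_const intro: convex_on_add)

lemma descent_lemma:
  fixes f :: "'a::real_inner \<Rightarrow> real"
  assumes grad: "\<And>y. GDERIV f y :> G y" and lip: "L-lipschitz_on UNIV G"
  shows "f y \<le> f x + inner (G x) (y - x) + L / 2 * (norm (y - x))\<^sup>2"
proof -
  define v where "v = y - x"
  define \<psi> where "\<psi> t = f (x + t *\<^sub>R v) - t * inner (G x) v - L / 2 * t\<^sup>2 * (norm v)\<^sup>2" for t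
  have "(\<psi> has_real_derivative
      inner v (G (x + t *\<^sub>R v)) - inner (G x) v - L * t * (norm v)\<^sup>2) (at t)" for t
    unfolding \<psi>_def
    by (rule derivative_eq_intros gderiv_along_line[OF grad] refl | simp)+
  then obtain c where c: "0 < c" "c < 1"
    and mvt: "\<psi> 1 - \<psi> 0 = inner v (G (x + c *\<^sub>R v) - G x) - L * c * (norm v)\<^sup>2"
    using MVT2[of 0 1 \<psi>] by (force simp: inner_diff_right inner_commute)
  have "inner v (G (x + c *\<^sub>R v) - G x) \<le> norm v * norm (G (x + c *\<^sub>R v) - G x)"
    by (rule norm_cauchy_schwarz)
  also have "\<dots> \<le> norm v * (L * norm (c *\<^sub>R v))"
    using lipschitz_onD[OF lip, of "x + c *\<^sub>R v" x] by (intro mult_left_mono) (auto simp: dist_norm)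
  also have "\<dots> = L * c * (norm v)\<^sup>2"
    using c by (simp add: power2_eq_square)
  finally have "\<psi> 1 \<le> \<psi> 0" using mvt by simp
  then show ?thesis unfolding \<psi>_def v_def by simp
qed

locale smooth_convex_penalty =
  fixes g :: "'a::real_inner \<Rightarrow> real" and G :: "'a \<Rightarrow> 'a" and L :: real
  assumes convex: "convex_on UNIV g" and grad: "\<And>y. GDERIV g y :> G y"
    and lipschitz: "L-lipschitz_on UNIV G" and L_pos: "L > 0" and nonneg: "\<And>y. 0 \<le> g y"
begin

lemma norm_grad_sq_le: "(norm (G x))\<^sup>2 / (2 * L) \<le> g x"
proof -
  have "g (x - (1 / L) *\<^sub>R G x)
      \<le> g x + inner (G x) (x - (1 / L) *\<^sub>R G x - x) + L / 2 * (norm (x - (1 / L) *\<^sub>R G x - x))\<^sup>2"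
    by (rule descent_lemma[OF grad lipschitz])
  also have "\<dots> = g x - (norm (G x))\<^sup>2 / (2 * L)"
    using L_pos by (simp add: inner_diff_right dot_square_norm power2_eq_square field_simps)
  finally show ?thesis using nonneg[of "x - (1 / L) *\<^sub>R G x"] by linarith
qed

lemma grad_eq_0_at_zero: "g z = 0 \<Longrightarrow> G z = 0"
  using norm_grad_sq_le[of z] L_pos by (simp add: divide_le_0_iff)

lemma grad_inner_ge_at_zero:
  assumes "g z = 0"
  shows "g x + (norm (G x))\<^sup>2 / (2 * L) \<le> inner (G x) (x - z)"
proof -
  define w where "w = z + (1 / L) *\<^sub>R G x"
  have "g x + inner (G x) (w - x) \<le> g w"
    by (rule convex_on_gderiv_tangent_le[OF convex grad])
  also have "g w \<le> g z + inner (G z) (w - z) + L / 2 * (norm (w - z))\<^sup>2"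
    by (rule descent_lemma[OF grad lipschitz])
  also have "\<dots> = (norm (G x))\<^sup>2 / (2 * L)"
    using L_pos assms grad_eq_0_at_zero[OF assms] unfolding w_def
    by (simp add: power2_eq_square field_simps)
  finally have "g x + inner (G x) (w - x) \<le> (norm (G x))\<^sup>2 / (2 * L)" .
  moreover have "inner (G x) (w - x) = (norm (G x))\<^sup>2 / L - inner (G x) (x - z)"
    unfolding w_def by (simp add: inner_diff_right inner_add_right power2_norm_eq_inner)
  ultimately show ?thesis by simp
qed

lemma gradient_step_dist_le:
  assumes "g z = 0" and "0 \<le> \<theta>" "\<theta> \<le> 1" and "0 \<le> \<gamma>" "\<gamma> \<le> 2 * (1 - \<theta>) / L"
  shows "(norm (x - \<gamma> *\<^sub>R G x - z))\<^sup>2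
    \<le> (norm (x - z))\<^sup>2 - 2 * \<gamma> * \<theta> * g x - \<theta> / 2 * (norm (\<gamma> *\<^sub>R G x))\<^sup>2"
proof -
  define N where "N = (norm (G x))\<^sup>2"
  have N: "0 \<le> N / L" "N / L \<le> 2 * g x"
    using norm_grad_sq_le[of x] L_pos by (auto simp: N_def field_simps)
  have "(1 + \<theta> / 2) * (\<gamma> * N) \<le> (1 + \<theta> / 2) * (2 * (1 - \<theta>) * (N / L))"
    using mult_right_mono[OF assms(5), of N] L_pos assms(2)
    by (intro mult_left_mono) (auto simp: N_def)
  also have "\<dots> = (1 + \<theta> / 2) * (2 * (1 - \<theta>)) * (N / L)"
    by simp
  also have "\<dots> \<le> (2 - \<theta>) * (N / L)"
    using N mult_nonneg_nonneg[OF assms(2) assms(2)]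
    by (intro mult_right_mono) (auto simp: algebra_simps)
  also have "\<dots> \<le> N / L + 2 * (1 - \<theta>) * g x"
    using mult_left_mono[OF N(2), of "1 - \<theta>"] assms(3)
    by (simp add: left_diff_distrib diff_divide_distrib)
  finally have "\<gamma> * ((1 + \<theta> / 2) * (\<gamma> * N)) \<le> \<gamma> * (N / L + 2 * (1 - \<theta>) * g x)"
    using assms(4) by (rule mult_left_mono)
  moreover have "2 * \<gamma> * (g x + N / (2 * L)) \<le> 2 * \<gamma> * inner (G x) (x - z)"
    using grad_inner_ge_at_zero[OF assms(1)] assms(4) by (intro mult_left_mono) (auto simp: N_def)
  moreover have "(norm (x - \<gamma> *\<^sub>R G x - z))\<^sup>2
      = (norm (x - z))\<^sup>2 - 2 * \<gamma> * inner (G x) (x - z) + \<gamma>\<^sup>2 * N"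
    unfolding N_def power2_norm_eq_inner
    by (simp add: inner_diff_left inner_diff_right inner_commute algebra_simps power2_eq_square)
  moreover have "(norm (\<gamma> *\<^sub>R G x))\<^sup>2 = \<gamma>\<^sup>2 * N"
    using assms(4) by (simp add: N_def power_mult_distrib)
  ultimately show ?thesis
    by (simp add: algebra_simps power2_eq_square)
qed

end

section \<open>The proximal operator and forward-backward steps\<close>

definition is_prox_point :: "real \<Rightarrow> ('a::real_normed_vector \<Rightarrow> real) \<Rightarrow> 'a \<Rightarrow> 'a \<Rightarrow> bool" where
  "is_prox_point r f x u \<longleftrightarrow>
    (\<forall>v. f u + (norm (u - x))\<^sup>2 / (2 * r) \<le> f v + (norm (v - x))\<^sup>2 / (2 * r))"

lemma GDERIV_norm_sq_div:
  fixes x :: "'a::real_inner"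
  assumes "r \<noteq> 0"
  shows "GDERIV (\<lambda>u. (norm (u - x))\<^sup>2 / (2 * r)) p :> (1 / r) *\<^sub>R (p - x)"
  unfolding gderiv_def power2_norm_eq_inner using assms
  by (auto intro!: derivative_eq_intros simp: fun_eq_iff inner_commute inner_diff_right field_simps)

lemma prox_point_variational_ineq:
  fixes f :: "'a::real_inner \<Rightarrow> real"
  assumes "convex_on UNIV f" and "r > 0"
    and "is_prox_point r f x u"
  shows "f u + inner ((1 / r) *\<^sub>R (x - u)) (v - u) \<le> f v"
proof -
  have "f u \<le> f v + inner ((1 / r) *\<^sub>R (u - x)) (v - u)"
    using assms unfolding is_prox_point_def
    by (intro min_convex_plus_smooth_imp_variational_ineq[OF _ _ GDERIV_norm_sq_div]) auto
  then show ?thesis by (simp add: inner_diff_left diff_divide_distrib)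
qed

lemma prox_point_unique:
  fixes f :: "'a::real_inner \<Rightarrow> real"
  assumes "convex_on UNIV f" and "r > 0"
    and "is_prox_point r f x u1" "is_prox_point r f x u2"
  shows "u1 = u2"
proof -
  have "inner ((1 / r) *\<^sub>R (x - u1)) (u2 - u1) + inner ((1 / r) *\<^sub>R (x - u2)) (u1 - u2) \<le> 0"
    using prox_point_variational_ineq[OF assms(1,2,3), of u2]
      prox_point_variational_ineq[OF assms(1,2,4), of u1] by linarith
  also have "inner ((1 / r) *\<^sub>R (x - u1)) (u2 - u1) + inner ((1 / r) *\<^sub>R (x - u2)) (u1 - u2)
      = (1 / r) * inner (u2 - u1) (u2 - u1)"
    by (simp add: inner_diff_left inner_diff_right inner_commute algebra_simps)
  finally have "inner (u2 - u1) (u2 - u1) \<le> 0"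
    using assms(2) by (simp add: divide_le_0_iff)
  then show ?thesis
    by (metis inner_gt_zero_iff not_le right_minus_eq)
qed

lemma convex_on_ge_minus_linear:
  fixes f :: "'a::euclidean_space \<Rightarrow> real"
  assumes "convex_on UNIV f"
  obtains c where "0 \<le> c" "\<And>u. f x - c * (1 + norm (u - x)) \<le> f u"
proof -
  have cont: "continuous_on UNIV f"
    by (rule convex_on_continuous[OF open_UNIV assms])
  obtain w where w: "\<And>y. y \<in> cball x 1 \<Longrightarrow> f w \<le> f y"
    using continuous_attains_inf[of "cball x 1" f] continuous_on_subset[OF cont] by force
  define c where "c = f x - f w"
  have "f x - c * (1 + norm (u - x)) \<le> f u" for u
  proof (cases "norm (u - x) \<le> 1")
    case True
    moreover have "0 \<le> c * norm (u - x)"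
      using w[of x] by (simp add: c_def)
    ultimately show ?thesis
      using w[of u] by (simp add: c_def dist_norm norm_minus_commute algebra_simps)
  next
    case False
    define t where "t = norm (u - x)"
    have t: "t > 1" using False t_def by simp
    have "f w \<le> f (x + (1 / t) *\<^sub>R (u - x))"
      using t by (intro w) (simp add: dist_norm t_def)
    also have "x + (1 / t) *\<^sub>R (u - x) = (1 - 1 / t) *\<^sub>R x + (1 / t) *\<^sub>R u"
      by (simp add: algebra_simps)
    also have "f \<dots> \<le> (1 - 1 / t) * f x + (1 / t) * f u"
      using t by (intro convex_onD[OF assms]) auto
    finally have "t * f w \<le> (t - 1) * f x + f u"
      using t by (simp add: field_simps)
    then show ?thesis
      using w[of x] t unfolding c_def t_def[symmetric] by (simp add: algebra_simps)
  qed
  moreover have "0 \<le> c" using w[of x] by (simp add: c_def)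
  ultimately show ?thesis using that by blast
qed

lemma prox_point_exists:
  fixes f :: "'a::euclidean_space \<Rightarrow> real"
  assumes "convex_on UNIV f" and "r > 0"
  shows "\<exists>u. is_prox_point r f x u"
proof -
  define \<Phi> where "\<Phi> u = f u + (norm (u - x))\<^sup>2 / (2 * r)" for u
  obtain c where c: "0 \<le> c" "\<And>u. f x - c * (1 + norm (u - x)) \<le> f u"
    using convex_on_ge_minus_linear[OF assms(1)] by blast
  define R where "R = 2 * r * c + 1"
  have "continuous_on (cball x R) \<Phi>"
    unfolding \<Phi>_def using convex_on_continuous[OF open_UNIV assms(1)] assms(2)
    by (intro continuous_intros) (auto intro: continuous_on_subset)
  moreover have xR: "x \<in> cball x R"
    using assms(2) c(1) by (simp add: R_def)
  ultimately obtain u where u: "\<forall>y \<in> cball x R. \<Phi> u \<le> \<Phi> y"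
    using continuous_attains_inf[of "cball x R" \<Phi>] by auto
  have "\<Phi> u \<le> \<Phi> v" for v
  proof (cases "v \<in> cball x R")
    case False
    define t where "t = norm (v - x)"
    have "t > R" using False by (simp add: t_def dist_norm norm_minus_commute)
    then have "2 * r * c * t \<le> (t - 1) * t"
      unfolding R_def by (intro mult_right_mono) (auto simp: t_def)
    then have "2 * r * c * (1 + t) < t\<^sup>2"
      using \<open>t > R\<close> unfolding R_def power2_eq_square by (simp add: algebra_simps)
    have "\<Phi> u \<le> \<Phi> x" using u xR by blast
    also have "\<dots> = f x" by (simp add: \<Phi>_def)
    also have "f x < \<Phi> v"
    proof -
      have "2 * r * (f x - c * (1 + t)) \<le> 2 * r * f v"
        using c(2)[of v] assms(2) unfolding t_def by (intro mult_left_mono) auto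
      then show ?thesis
        using \<open>2 * r * c * (1 + t) < t\<^sup>2\<close> assms(2)
        unfolding \<Phi>_def t_def[symmetric] by (simp add: field_simps)
    qed
    finally show ?thesis by (rule less_imp_le)
  qed (use u in blast)
  then show ?thesis unfolding \<Phi>_def is_prox_point_def by blast
qed

lemma prox_variational_ineq:
  fixes f :: "'a::euclidean_space \<Rightarrow> real"
  assumes "convex_on UNIV f" and "r > 0"
  shows "f (prox r f x) + inner ((1 / r) *\<^sub>R (x - prox r f x)) (v - prox r f x) \<le> f v"
proof -
  have "\<exists>!u. is_prox_point r f x u"
    using prox_point_exists[OF assms] prox_point_unique[OF assms] by blast
  then have "is_prox_point r f x (prox r f x)"
    unfolding prox_def is_prox_point_def by (rule theI')
  then show ?thesis by (rule prox_point_variational_ineq[OF assms])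
qed

lemma forward_backward_step_dist_le:
  fixes f h :: "'a::euclidean_space \<Rightarrow> real"
  assumes f: "convex_on UNIV f" and h: "convex_on UNIV h" and grad: "\<And>y. GDERIV h y :> H y"
    and lip: "L-lipschitz_on UNIV H" and "\<alpha> > 0"
    and p: "p = prox \<alpha> f (q - \<alpha> *\<^sub>R H q)"
  shows "(norm (p - z))\<^sup>2
    \<le> (norm (q - z))\<^sup>2 - 2 * \<alpha> * ((f p + h p) - (f z + h z)) + (2 * \<alpha> * L - 1) * (norm (p - q))\<^sup>2"
proof -
  \<comment> \<open>By prox optimality \<open>s\<close> is a subgradient of \<open>f\<close> at \<open>p\<close>, and \<open>p = q - \<alpha> (H q + s)\<close>.\<close>
  define s where "s = (1 / \<alpha>) *\<^sub>R ((q - \<alpha> *\<^sub>R H q) - p)"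
  define d where "d = H q + s"
  have "f p + inner s (z - p) \<le> f z"
    unfolding s_def p by (rule prox_variational_ineq[OF f \<open>\<alpha> > 0\<close>])
  moreover have "h q + inner (H q) (z - q) \<le> h z" "h p + inner (H p) (q - p) \<le> h q"
    by (rule convex_on_gderiv_tangent_le[OF h grad])+
  moreover have "- (L * (norm (p - q))\<^sup>2) \<le> inner (H p - H q) (q - p)"
  proof -
    have "norm (H p - H q) * norm (q - p) \<le> L * norm (p - q) * norm (q - p)"
      using lipschitz_onD[OF lip, of p q] by (intro mult_right_mono) (auto simp: dist_norm)
    then show ?thesis
      using norm_cauchy_schwarz[of "H q - H p" "q - p"]
      by (simp add: norm_minus_commute power2_eq_square inner_diff_left)
  qed
  ultimately have "(f p + h p) - (f z + h z) - L * (norm (p - q))\<^sup>2 \<le> inner d (p - z)"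
    unfolding d_def
    by (simp add: inner_add_left inner_add_right inner_diff_left inner_diff_right inner_commute)
  then have "2 * \<alpha> * ((f p + h p) - (f z + h z) - L * (norm (p - q))\<^sup>2) \<le> 2 * \<alpha> * inner d (p - z)"
    using \<open>\<alpha> > 0\<close> by (intro mult_left_mono) auto
  moreover have "(norm (q - z))\<^sup>2 = (norm (p - z))\<^sup>2 + 2 * \<alpha> * inner d (p - z) + (norm (p - q))\<^sup>2"
  proof -
    have "q - z = (p - z) + \<alpha> *\<^sub>R d" "p - q = - (\<alpha> *\<^sub>R d)"
      using \<open>\<alpha> > 0\<close> by (simp_all add: d_def s_def algebra_simps)
    then show ?thesis unfolding power2_norm_eq_inner
      by (simp add: inner_add_left inner_add_right inner_commute algebra_simps power2_eq_square)
  qed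
  ultimately show ?thesis
    by (simp add: algebra_simps)
qed

section \<open>Sequences and series\<close>

lemma telescope_le:
  fixes a b :: "nat \<Rightarrow> real"
  assumes "\<And>j. j < n \<Longrightarrow> a (Suc j) \<le> a j - b j"
  shows "a n \<le> a 0 - (\<Sum>j<n. b j)"
  using assms by (induction n) (force simp: less_Suc_eq)+

lemma quasi_fejer:
  fixes a c e :: "nat \<Rightarrow> real"
  assumes "\<And>n. 0 \<le> a n" "\<And>n. 0 \<le> c n" "\<And>n. 0 \<le> e n" "summable e"
    and step: "\<And>n. a (Suc n) \<le> a n - c n + e n"
  shows "convergent a" "summable c"
proof -
  have partial: "(\<Sum>i<n. c i) \<le> a 0 - a n + (\<Sum>i<n. e i)" for n
  proof (induction n)
    case (Suc n)
    then show ?case using step[of n] by simp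
  qed simp
  have tail: "(\<Sum>i<n. e i) \<le> suminf e" for n
    using assms(3,4) by (intro sum_le_suminf) auto
  have "(\<Sum>i<n. c i) \<le> a 0 + suminf e" for n
    using partial[of n] tail[of n] assms(1)[of n] by linarith
  then show "summable c"
    by (rule summableI_nonneg_bounded[OF assms(2)])
  define u where "u n = a n + (suminf e - (\<Sum>i<n. e i))" for n
  have "decseq u"
  proof (unfold decseq_Suc_iff, intro allI)
    show "u (Suc n) \<le> u n" for n
      using step[of n] assms(2)[of n] by (simp add: u_def)
  qed
  moreover have "0 \<le> u n" for n
    unfolding u_def using assms(1) tail[of n] by simp
  ultimately obtain l where "u \<longlonglongrightarrow> l"
    using decseq_convergent by blast
  moreover have "(\<lambda>n. suminf e - (\<Sum>i<n. e i)) \<longlonglongrightarrow> 0"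
    using tendsto_diff[OF tendsto_const summable_LIMSEQ[OF assms(4)], of "suminf e"] by simp
  ultimately have "(\<lambda>n. u n - (suminf e - (\<Sum>i<n. e i))) \<longlonglongrightarrow> l - 0"
    by (rule tendsto_diff)
  then show "convergent a" unfolding u_def convergent_def by auto
qed

lemma quasi_fejer_eventually:
  fixes a c e :: "nat \<Rightarrow> real"
  assumes "\<And>n. n \<ge> K \<Longrightarrow> 0 \<le> a n" "\<And>n. n \<ge> K \<Longrightarrow> 0 \<le> c n" "\<And>n. n \<ge> K \<Longrightarrow> 0 \<le> e n"
    and "summable e" and "\<And>n. n \<ge> K \<Longrightarrow> a (Suc n) \<le> a n - c n + e n"
  shows "convergent a" "summable c"
proof -
  have "convergent (\<lambda>n. a (n + K)) \<and> summable (\<lambda>n. c (n + K))"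
    using quasi_fejer[of "\<lambda>n. a (n + K)" "\<lambda>n. c (n + K)" "\<lambda>n. e (n + K)"] assms by auto
  then show "convergent a" "summable c"
    by (simp_all add: convergent_ignore_initial_segment)
qed

lemma liminf_le_if_weighted_summable:
  fixes u w b :: "nat \<Rightarrow> real"
  assumes "summable b" "\<not> summable w"
    and "\<And>k. k \<ge> K \<Longrightarrow> 0 \<le> w k" "\<And>k. k \<ge> K \<Longrightarrow> w k * (u k - c) \<le> b k"
  shows "liminf (\<lambda>k. ereal (u k)) \<le> ereal c"
proof (rule ccontr)
  assume "\<not> ?thesis"
  then have "ereal c < liminf (\<lambda>k. ereal (u k))"
    by simp
  from ereal_dense2[OF this] obtain d where cd: "ereal c < ereal d"
    and dl: "ereal d < liminf (\<lambda>k. ereal (u k))"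
    by blast
  from less_LiminfD[OF dl] obtain N where N: "\<And>k. k \<ge> N \<Longrightarrow> d < u k"
    unfolding eventually_sequentially by auto
  from cd have "c < d" by simp
  have "norm (w k) \<le> b k / (d - c)" if "k \<ge> max K N" for k
  proof -
    have "w k * (d - c) \<le> w k * (u k - c)"
      using N[of k] assms(3)[of k] that by (intro mult_left_mono) auto
    then show ?thesis
      using assms(3,4)[of k] that \<open>c < d\<close> by (simp add: pos_le_divide_eq)
  qed
  then have "summable w"
    by (rule summable_comparison_test'[OF summable_divide[OF assms(1)], of "max K N"]) simp
  with assms(2) show False ..
qed

lemma summable_of_weighted_ereal_suminf:
  fixes w :: "nat \<Rightarrow> real" and T :: "nat \<Rightarrow> ereal"
  assumes "\<And>k. 0 < w k" "\<And>k. 0 \<le> T k" "(\<Sum>k. ereal (w k) * T k) \<noteq> \<infinity>"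
  shows "T k = ereal (real_of_ereal (T k))" "summable (\<lambda>k. w k * real_of_ereal (T k))"
proof -
  have nonneg: "0 \<le> ereal (w k) * T k" for k
    using assms(1,2)[of k] by simp
  have finite: "T k \<noteq> \<infinity>" for k
  proof -
    have "ereal (w k) * T k \<noteq> \<infinity>"
      by (rule suminf_PInfty[OF nonneg assms(3)])
    then show ?thesis
      using assms(1)[of k] by auto
  qed
  then show real: "T k = ereal (real_of_ereal (T k))" for k
    using assms(2)[of k] by (cases "T k") auto
  show "summable (\<lambda>k. w k * real_of_ereal (T k))"
  proof (rule summable_ereal)
    show "0 \<le> w k * real_of_ereal (T k)" for k
      using assms(1,2)[of k] by (simp add: real_of_ereal_pos)
    have "ereal (w k * real_of_ereal (T k)) = ereal (w k) * T k" for k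
      using real[of k] by (simp flip: times_ereal.simps(1))
    then show "(\<Sum>k. ereal (w k * real_of_ereal (T k))) \<noteq> \<infinity>"
      using assms(3) by simp
  qed
qed

lemma LIMSEQ_if_convergent_dist_and_subseq:
  fixes x :: "nat \<Rightarrow> 'a::metric_space"
  assumes "convergent (\<lambda>k. dist (x k) c)" "strict_mono s" "(x \<circ> s) \<longlonglongrightarrow> c"
  shows "x \<longlonglongrightarrow> c"
proof -
  obtain l where l: "(\<lambda>k. dist (x k) c) \<longlonglongrightarrow> l"
    using assms(1) unfolding convergent_def by blast
  have "(\<lambda>j. dist (x (s j)) c) \<longlonglongrightarrow> l"
    using LIMSEQ_subseq_LIMSEQ[OF l assms(2)] by (simp add: o_def)
  moreover have "(\<lambda>j. dist (x (s j)) c) \<longlonglongrightarrow> 0"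
    using tendsto_dist_iff[THEN iffD1, OF assms(3)] by (simp add: o_def)
  ultimately have "l = 0"
    by (rule LIMSEQ_unique)
  then show ?thesis
    unfolding tendsto_dist_iff[of x] using l by simp
qed

section \<open>Normal cones and the Fenchel conjugate\<close>

lemma normal_cone_scaleR: "q \<in> normal_cone A z \<Longrightarrow> 0 \<le> c \<Longrightarrow> c *\<^sub>R q \<in> normal_cone A z"
  by (auto simp: normal_cone_def mult_nonneg_nonpos split: if_splits)

lemma support_fun_normal_cone:
  assumes "u \<in> normal_cone A z"
  shows "support_fun A u = ereal (inner z u)"
proof -
  have "z \<in> A" and "\<And>y. y \<in> A \<Longrightarrow> inner y u \<le> inner z u"
    using assms by (auto simp: normal_cone_def inner_diff_right inner_commute split: if_splits)
  then show ?thesis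
    unfolding support_fun_def by (intro antisym SUP_least SUP_upper2[of z]) auto
qed

lemma fenchel_conj_minus_support_fun_ge:
  assumes "u \<in> normal_cone A z"
  shows "ereal (inner u (y - z) - g y) \<le> fenchel_conj g u - support_fun A u"
proof -
  have "ereal (inner u (y - z) - g y) = ereal (inner u y - g y) - ereal (inner z u)"
    by (simp add: inner_diff_right inner_commute)
  also have "\<dots> \<le> fenchel_conj g u - ereal (inner z u)"
    unfolding fenchel_conj_def by (intro ereal_minus_mono SUP_upper) auto
  also have "\<dots> = fenchel_conj g u - support_fun A u"
    by (simp add: support_fun_normal_cone[OF assms])
  finally show ?thesis .
qed

section \<open>One iteration of the penalty forward-backward scheme\<close>

locale penalty_forward_backward =
  fixes m :: nat
    and f h :: "nat \<Rightarrow> 'a::euclidean_space \<Rightarrow> real"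
    and gradh :: "nat \<Rightarrow> 'a \<Rightarrow> 'a"
    and L :: "nat \<Rightarrow> real"
    and g :: "'a \<Rightarrow> real" and gradg :: "'a \<Rightarrow> 'a" and Lg :: real
    and \<alpha> \<beta> :: "nat \<Rightarrow> real"
    and x :: "nat \<Rightarrow> 'a"
    and \<phi> :: "nat \<Rightarrow> nat \<Rightarrow> 'a"
  assumes m: "m \<ge> 1"
    and f_convex: "\<And>i. i \<in> {1..m} \<Longrightarrow> convex_on UNIV (f i)"
    and h_convex: "\<And>i. i \<in> {1..m} \<Longrightarrow> convex_on UNIV (h i)"
    and h_grad: "\<And>i y. i \<in> {1..m} \<Longrightarrow> GDERIV (h i) y :> gradh i y"
    and h_lip: "\<And>i. i \<in> {1..m} \<Longrightarrow> L i > 0 \<and> (L i)-lipschitz_on UNIV (gradh i)"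
    and g_convex: "convex_on UNIV g"
    and g_grad: "\<And>y. GDERIV g y :> gradg y"
    and g_lip: "Lg > 0" "Lg-lipschitz_on UNIV gradg"
    and g_min: "(\<exists>y. g y = 0) \<and> (\<forall>y. 0 \<le> g y)"
    and \<alpha>_pos: "\<And>k. k \<ge> 1 \<Longrightarrow> \<alpha> k > 0"
    and \<beta>_pos: "\<And>k. k \<ge> 1 \<Longrightarrow> \<beta> k > 0"
    and phi_1: "\<And>k. k \<ge> 1 \<Longrightarrow> \<phi> 1 k = x k - (\<alpha> k * \<beta> k) *\<^sub>R gradg (x k)"
    and phi_step: "\<And>i k. k \<ge> 1 \<Longrightarrow> i \<in> {1..m} \<Longrightarrow>
        \<phi> (i + 1) k = prox (\<alpha> k) (f i) (\<phi> i k - \<alpha> k *\<^sub>R gradh i (\<phi> i k))"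
    and x_step: "\<And>k. k \<ge> 1 \<Longrightarrow> x (k + 1) = \<phi> (m + 1) k"
begin

abbreviation A :: "'a set" where "A \<equiv> argmin_set g"

definition F :: "'a \<Rightarrow> real" where "F y = (\<Sum>i\<in>{1..m}. f i y + h i y)"

definition solutions :: "'a set" where "solutions = {z \<in> A. \<forall>y \<in> A. F z \<le> F y}"

definition \<gamma> :: "nat \<Rightarrow> real" where "\<gamma> k = \<alpha> k * \<beta> k"

definition Lsum :: real where "Lsum = (\<Sum>i\<in>{1..m}. L i)"

definition stage :: "nat \<Rightarrow> nat \<Rightarrow> 'a" where "stage k j = (if j = 0 then x k else \<phi> j k)"

definition D :: "nat \<Rightarrow> real" where "D k = (\<Sum>j<m + 1. (norm (stage k (Suc j) - stage k j))\<^sup>2)"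

definition F_stage :: "nat \<Rightarrow> real" where
  "F_stage k = (\<Sum>i\<in>{1..m}. f i (\<phi> (i + 1) k) + h i (\<phi> (i + 1) k))"

lemma g_nonneg: "0 \<le> g y"
  using g_min by blast

lemma argmin_iff: "y \<in> A \<longleftrightarrow> g y = 0"
proof
  assume "y \<in> A"
  obtain y0 where "g y0 = 0"
    using g_min by blast
  moreover have "g y \<le> g y0"
    using \<open>y \<in> A\<close> unfolding argmin_set_def by blast
  ultimately show "g y = 0"
    using g_nonneg[of y] by linarith
next
  assume "g y = 0"
  then show "y \<in> A"
    unfolding argmin_set_def using g_nonneg by simp
qed

lemma convex_argmin: "convex A"
proof (rule convexI)
  fix u v and t s :: real
  assume "u \<in> A" "v \<in> A" "0 \<le> t" "0 \<le> s" "t + s = 1"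
  then have "1 - s = t" "s \<le> 1" by auto
  then have "g (t *\<^sub>R u + s *\<^sub>R v) \<le> t * g u + s * g v"
    using convex_onD[OF g_convex, of s u v] \<open>0 \<le> s\<close> by simp
  also have "\<dots> = 0"
    using \<open>u \<in> A\<close> \<open>v \<in> A\<close> by (simp add: argmin_iff)
  finally show "t *\<^sub>R u + s *\<^sub>R v \<in> A"
    using g_nonneg[of "t *\<^sub>R u + s *\<^sub>R v"] by (simp add: argmin_iff)
qed

sublocale penalty: smooth_convex_penalty g gradg Lg
  using g_convex g_grad g_lip g_nonneg by unfold_locales auto

lemma \<gamma>_pos: "k \<ge> 1 \<Longrightarrow> \<gamma> k > 0"
  using \<alpha>_pos \<beta>_pos by (simp add: \<gamma>_def)

lemma L_le_Lsum: "i \<in> {1..m} \<Longrightarrow> L i \<le> Lsum"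
  unfolding Lsum_def using h_lip by (intro member_le_sum) (auto simp: less_imp_le)

lemma D_nonneg: "0 \<le> D k"
  unfolding D_def by (simp add: sum_nonneg)

lemma penalty_stage_dist_le:
  assumes "k \<ge> 1" "z \<in> A" "0 \<le> \<theta>" "\<theta> \<le> 1" "\<gamma> k \<le> 2 * (1 - \<theta>) / Lg"
  shows "(norm (\<phi> 1 k - z))\<^sup>2
    \<le> (norm (x k - z))\<^sup>2 - 2 * \<gamma> k * \<theta> * g (x k) - \<theta> / 2 * (norm (\<phi> 1 k - x k))\<^sup>2"
proof -
  have "\<phi> 1 k = x k - \<gamma> k *\<^sub>R gradg (x k)"
    using phi_1[OF assms(1)] by (simp add: \<gamma>_def)
  then show ?thesis
    using penalty.gradient_step_dist_le[of z \<theta> "\<gamma> k" "x k"] assms \<gamma>_pos[OF assms(1)]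
    by (simp add: argmin_iff)
qed

lemma prox_stage_dist_le:
  assumes "k \<ge> 1" "i \<in> {1..m}" "\<alpha> k * L i \<le> 1 / 4"
  shows "(norm (\<phi> (i + 1) k - z))\<^sup>2 \<le> (norm (\<phi> i k - z))\<^sup>2
    - 2 * \<alpha> k * ((f i (\<phi> (i + 1) k) + h i (\<phi> (i + 1) k)) - (f i z + h i z))
    - 1 / 2 * (norm (\<phi> (i + 1) k - \<phi> i k))\<^sup>2"
proof -
  have "(2 * \<alpha> k * L i - 1) * (norm (\<phi> (i + 1) k - \<phi> i k))\<^sup>2
      \<le> - 1 / 2 * (norm (\<phi> (i + 1) k - \<phi> i k))\<^sup>2"
    using assms(3) by (intro mult_right_mono) auto
  moreover have "(norm (\<phi> (i + 1) k - z))\<^sup>2 \<le> (norm (\<phi> i k - z))\<^sup>2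
      - 2 * \<alpha> k * ((f i (\<phi> (i + 1) k) + h i (\<phi> (i + 1) k)) - (f i z + h i z))
      + (2 * \<alpha> k * L i - 1) * (norm (\<phi> (i + 1) k - \<phi> i k))\<^sup>2"
    using forward_backward_step_dist_le[OF f_convex[OF assms(2)] h_convex[OF assms(2)]
        h_grad[OF assms(2)] conjunct2[OF h_lip[OF assms(2)]] \<alpha>_pos[OF assms(1)]
        phi_step[OF assms(1,2)]]
    by simp
  ultimately show ?thesis by simp
qed

lemma stage_dist_le:
  assumes "k \<ge> 1" "z \<in> A" "0 \<le> \<theta>" "\<theta> \<le> 1" "\<gamma> k \<le> 2 * (1 - \<theta>) / Lg" "\<alpha> k * Lsum \<le> 1 / 4"
    and "j < m + 1"
  shows "(norm (stage k (Suc j) - z))\<^sup>2 \<le> (norm (stage k j - z))\<^sup>2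
    - (if j = 0 then 2 * \<gamma> k * \<theta> * g (x k)
       else 2 * \<alpha> k * (f j (\<phi> (j + 1) k) + h j (\<phi> (j + 1) k) - (f j z + h j z)))
    - \<theta> / 2 * (norm (stage k (Suc j) - stage k j))\<^sup>2"
proof (cases "j = 0")
  case True
  then show ?thesis
    using penalty_stage_dist_le[OF assms(1-5)] by (simp add: stage_def)
next
  case False
  then have j: "j \<in> {1..m}"
    using assms(7) by simp
  have "\<alpha> k * L j \<le> \<alpha> k * Lsum"
    using L_le_Lsum[OF j] \<alpha>_pos[OF assms(1)] by simp
  then have "\<alpha> k * L j \<le> 1 / 4"
    using assms(6) by linarith
  from prox_stage_dist_le[OF assms(1) j this, of z] show ?thesis
    using False assms(4)
      mult_right_mono[of \<theta> 1 "(norm (\<phi> (j + 1) k - \<phi> j k))\<^sup>2"]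
    by (simp add: stage_def)
qed

lemma iteration_dist_le:
  assumes "k \<ge> 1" "z \<in> A" "0 \<le> \<theta>" "\<theta> \<le> 1" "\<gamma> k \<le> 2 * (1 - \<theta>) / Lg" "\<alpha> k * Lsum \<le> 1 / 4"
  shows "(norm (x (k + 1) - z))\<^sup>2 \<le> (norm (x k - z))\<^sup>2 - 2 * \<gamma> k * \<theta> * g (x k)
    - 2 * \<alpha> k * (F_stage k - F z) - \<theta> / 2 * D k"
proof -
  define G where "G i = f i (\<phi> (i + 1) k) + h i (\<phi> (i + 1) k) - (f i z + h i z)" for i
  define b where "b j = (if j = 0 then 2 * \<gamma> k * \<theta> * g (x k) else 2 * \<alpha> k * G j)
    + \<theta> / 2 * (norm (stage k (Suc j) - stage k j))\<^sup>2" for j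
  have "(norm (stage k (Suc j) - z))\<^sup>2 \<le> (norm (stage k j - z))\<^sup>2 - b j" if "j < m + 1" for j
    using stage_dist_le[OF assms that] by (cases "j = 0") (simp_all add: b_def G_def)
  then have "(norm (stage k (m + 1) - z))\<^sup>2 \<le> (norm (stage k 0 - z))\<^sup>2 - (\<Sum>j<m + 1. b j)"
    by (intro telescope_le) simp
  moreover have "(\<Sum>j<m + 1. b j)
      = 2 * \<gamma> k * \<theta> * g (x k) + 2 * \<alpha> k * (F_stage k - F z) + \<theta> / 2 * D k"
  proof -
    have "(\<Sum>j<m + 1. b j) = (\<Sum>j<Suc m. if j = 0 then 2 * \<gamma> k * \<theta> * g (x k) else 2 * \<alpha> k * G j)
        + \<theta> / 2 * D k"
      unfolding b_def D_def sum.distrib sum_distrib_left by simp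
    also have "(\<Sum>j<Suc m. if j = 0 then 2 * \<gamma> k * \<theta> * g (x k) else 2 * \<alpha> k * G j)
        = 2 * \<gamma> k * \<theta> * g (x k) + (\<Sum>i\<in>{1..m}. 2 * \<alpha> k * G i)"
      unfolding sum.lessThan_Suc_shift by (simp add: sum.atLeast1_atMost_eq)
    also have "(\<Sum>i\<in>{1..m}. 2 * \<alpha> k * G i) = 2 * \<alpha> k * (F_stage k - F z)"
      unfolding G_def F_stage_def F_def by (simp add: sum_subtractf flip: sum_distrib_left)
    finally show ?thesis by simp
  qed
  ultimately show ?thesis
    using x_step[OF assms(1)] by (simp add: stage_def)
qed

lemma stage_dist_sq_le:
  assumes "i \<le> m"
  shows "(norm (\<phi> (i + 1) k - x k))\<^sup>2 \<le> (m + 1) * D k"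
proof -
  have "\<phi> (i + 1) k - x k = (\<Sum>j<i + 1. stage k (Suc j) - stage k j)"
    unfolding sum_lessThan_telescope by (simp add: stage_def)
  then have "norm (\<phi> (i + 1) k - x k) \<le> (\<Sum>j<i + 1. norm (stage k (Suc j) - stage k j))"
    by (simp only: norm_sum)
  also have "\<dots> \<le> (\<Sum>j<m + 1. norm (stage k (Suc j) - stage k j))"
    using assms by (intro sum_mono2) auto
  finally have "(norm (\<phi> (i + 1) k - x k))\<^sup>2 \<le> (\<Sum>j<m + 1. norm (stage k (Suc j) - stage k j))\<^sup>2"
    by (simp add: power_mono)
  also have "\<dots> \<le> (\<Sum>j<m + 1. (norm (stage k (Suc j) - stage k j))\<^sup>2) * card {..<m + 1}"
    by (rule sum_squared_le_sum_of_squares)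
  finally show ?thesis
    by (simp add: D_def mult.commute)
qed

lemma stage_inner_young:
  assumes "i \<le> m" "\<delta> > 0"
  shows "- (2 * \<alpha> k * inner c (\<phi> (i + 1) k - x k))
    \<le> (\<alpha> k)\<^sup>2 * (norm c)\<^sup>2 / \<delta> + \<delta> * (m + 1) * D k"
proof -
  have "- (2 * \<alpha> k * inner c (\<phi> (i + 1) k - x k)) = 2 * inner (- \<alpha> k *\<^sub>R c) (\<phi> (i + 1) k - x k)"
    by simp
  also have "\<dots> \<le> (norm (- \<alpha> k *\<^sub>R c))\<^sup>2 / \<delta> + \<delta> * (norm (\<phi> (i + 1) k - x k))\<^sup>2"
    by (rule inner_le_young[OF assms(2)])
  also have "\<dots> \<le> (\<alpha> k)\<^sup>2 * (norm c)\<^sup>2 / \<delta> + \<delta> * ((m + 1) * D k)"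
    using stage_dist_sq_le[OF assms(1)] assms(2) by (simp add: power_mult_distrib)
  finally show ?thesis by simp
qed

lemma stage_inner_young_sum:
  assumes "0 < \<theta>"
  shows "- (2 * \<alpha> k * (\<Sum>i\<in>{1..m}. inner (c i) (\<phi> (i + 1) k - x k)))
    \<le> 4 * m * (m + 1) * (\<alpha> k)\<^sup>2 * (\<Sum>i\<in>{1..m}. (norm (c i))\<^sup>2) / \<theta> + \<theta> / 4 * D k"
proof -
  \<comment> \<open>\<open>\<delta>\<close> is chosen so that the \<open>m\<close> Young inequalities together cost exactly \<open>\<theta> / 4 * D k\<close>.\<close>
  define N where "N = 4 * real m * (real m + 1)"
  define \<delta> where "\<delta> = \<theta> / N"
  have "N > 0"
    using m by (simp add: N_def)
  have "m * \<delta> * (m + 1) = \<delta> * N / 4"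
    by (simp add: N_def algebra_simps)
  also have "\<delta> * N = \<theta>"
    using \<open>N > 0\<close> by (simp add: \<delta>_def)
  finally have \<delta>: "\<delta> > 0" "m * \<delta> * (m + 1) = \<theta> / 4"
    using \<open>N > 0\<close> assms by (simp_all add: \<delta>_def)
  have "- (2 * \<alpha> k * (\<Sum>i\<in>{1..m}. inner (c i) (\<phi> (i + 1) k - x k)))
      \<le> (\<Sum>i\<in>{1..m}. (\<alpha> k)\<^sup>2 * (norm (c i))\<^sup>2 / \<delta> + \<delta> * (m + 1) * D k)"
    unfolding sum_distrib_left sum_negf[symmetric]
    by (intro sum_mono stage_inner_young \<delta>) auto
  also have "\<dots> = (\<alpha> k)\<^sup>2 * (\<Sum>i\<in>{1..m}. (norm (c i))\<^sup>2) / \<delta> + m * \<delta> * (m + 1) * D k"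
    by (simp add: sum.distrib sum_distrib_left sum_divide_distrib)
  also have "(\<alpha> k)\<^sup>2 * (\<Sum>i\<in>{1..m}. (norm (c i))\<^sup>2) / \<delta>
      = 4 * m * (m + 1) * (\<alpha> k)\<^sup>2 * (\<Sum>i\<in>{1..m}. (norm (c i))\<^sup>2) / \<theta>"
    by (simp add: \<delta>_def N_def algebra_simps)
  finally show ?thesis
    unfolding \<delta>(2) .
qed

lemma F_stage_ge_multipliers:
  assumes sub: "\<And>i y. i \<in> {1..m} \<Longrightarrow> f i z + h i z + inner (c i) (y - z) \<le> f i y + h i y"
    and sum_c: "(\<Sum>i\<in>{1..m}. c i) = - p"
  shows "- inner p (x k - z) + (\<Sum>i\<in>{1..m}. inner (c i) (\<phi> (i + 1) k - x k)) \<le> F_stage k - F z"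
proof -
  have "- inner p (x k - z) + (\<Sum>i\<in>{1..m}. inner (c i) (\<phi> (i + 1) k - x k))
      = (\<Sum>i\<in>{1..m}. inner (c i) (x k - z) + inner (c i) (\<phi> (i + 1) k - x k))"
    unfolding sum.distrib inner_sum_left[symmetric] sum_c by simp
  also have "\<dots> = (\<Sum>i\<in>{1..m}. inner (c i) (\<phi> (i + 1) k - z))"
    unfolding inner_add_right[symmetric] by simp
  also have "\<dots> \<le> F_stage k - F z"
    unfolding F_stage_def F_def sum_subtractf[symmetric]
  proof (rule sum_mono)
    fix i assume "i \<in> {1..m}"
    then show "inner (c i) (\<phi> (i + 1) k - z)
        \<le> f i (\<phi> (i + 1) k) + h i (\<phi> (i + 1) k) - (f i z + h i z)"
      using sub[of i "\<phi> (i + 1) k"] by simp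
  qed
  finally show ?thesis .
qed

lemma inner_normal_le_penalty:
  assumes "k \<ge> 1" "0 < \<theta>"
    and "\<And>y. inner (((2 / \<theta>) *\<^sub>R p) /\<^sub>R \<beta> k) (y - z) - g y \<le> t"
  shows "2 * \<alpha> k * inner p (x k - z) \<le> \<gamma> k * \<theta> * (g (x k) + t)"
proof -
  have "2 * \<alpha> k * inner p (x k - z) = \<gamma> k * \<theta> * inner (((2 / \<theta>) *\<^sub>R p) /\<^sub>R \<beta> k) (x k - z)"
    using \<beta>_pos[OF assms(1)] assms(2) by (simp add: \<gamma>_def)
  also have "\<dots> \<le> \<gamma> k * \<theta> * (g (x k) + t)"
    using assms(3)[of "x k"] \<gamma>_pos[OF assms(1)] assms(2) by (intro mult_left_mono) auto
  finally show ?thesis .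
qed

lemma gap_lower_bound:
  assumes "k \<ge> 1" "0 < \<theta>"
    and "\<And>i y. i \<in> {1..m} \<Longrightarrow> f i z + h i z + inner (c i) (y - z) \<le> f i y + h i y"
    and "(\<Sum>i\<in>{1..m}. c i) = - p"
    and "\<And>y. inner (((2 / \<theta>) *\<^sub>R p) /\<^sub>R \<beta> k) (y - z) - g y \<le> t"
  shows "0 \<le> \<gamma> k * \<theta> * g (x k) + 2 * \<alpha> k * (F_stage k - F z) + \<theta> / 4 * D k
    + (\<gamma> k * \<theta> * t + 4 * m * (m + 1) * (\<alpha> k)\<^sup>2 * (\<Sum>i\<in>{1..m}. (norm (c i))\<^sup>2) / \<theta>)"
proof -
  let ?E = "\<Sum>i\<in>{1..m}. inner (c i) (\<phi> (i + 1) k - x k)"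
  have "2 * \<alpha> k * (- inner p (x k - z) + ?E) \<le> 2 * \<alpha> k * (F_stage k - F z)"
    using F_stage_ge_multipliers[OF assms(3,4)] \<alpha>_pos[OF assms(1)] by (intro mult_left_mono) auto
  then show ?thesis
    using stage_inner_young_sum[OF assms(2), of k c] inner_normal_le_penalty[OF assms(1,2,5)]
    by (simp add: algebra_simps)
qed

lemma stages_tendsto_iterates:
  assumes "summable D" "i \<le> m"
  shows "(\<lambda>k. \<phi> (i + 1) k - x k) \<longlonglongrightarrow> 0"
proof -
  have lim: "(\<lambda>k. (m + 1) * D k) \<longlonglongrightarrow> 0"
    using tendsto_mult_right_zero[OF summable_LIMSEQ_zero[OF assms(1)]] by simp
  have "(\<lambda>k. (norm (\<phi> (i + 1) k - x k))\<^sup>2) \<longlonglongrightarrow> 0"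
  proof (rule tendsto_sandwich[OF _ _ tendsto_const lim])
    show "\<forall>\<^sub>F k in sequentially. 0 \<le> (norm (\<phi> (i + 1) k - x k))\<^sup>2"
      by simp
    show "\<forall>\<^sub>F k in sequentially. (norm (\<phi> (i + 1) k - x k))\<^sup>2 \<le> (m + 1) * D k"
      using stage_dist_sq_le[OF assms(2)] by simp
  qed
  then have "(\<lambda>k. sqrt ((norm (\<phi> (i + 1) k - x k))\<^sup>2)) \<longlonglongrightarrow> sqrt 0"
    by (rule tendsto_real_sqrt)
  then show ?thesis
    by (simp add: tendsto_norm_zero_iff)
qed

lemma F_stage_subseq_tendsto:
  assumes "summable D" "strict_mono s" "(x \<circ> s) \<longlonglongrightarrow> y"
  shows "(\<lambda>j. F_stage (s j)) \<longlonglongrightarrow> F y"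
  unfolding F_stage_def F_def
proof (intro tendsto_sum tendsto_add)
  fix i assume "i \<in> {1..m}"
  have "(\<lambda>j. (\<phi> (i + 1) (s j) - x (s j)) + x (s j)) \<longlonglongrightarrow> 0 + y"
    using LIMSEQ_subseq_LIMSEQ[OF stages_tendsto_iterates[OF assms(1)] assms(2)]
      \<open>i \<in> {1..m}\<close> assms(3)
    by (intro tendsto_add) (auto simp: o_def)
  then have "(\<lambda>j. \<phi> (i + 1) (s j)) \<longlonglongrightarrow> y"
    by simp
  then show "(\<lambda>j. f i (\<phi> (i + 1) (s j))) \<longlonglongrightarrow> f i y" "(\<lambda>j. h i (\<phi> (i + 1) (s j))) \<longlonglongrightarrow> h i y"
    using convex_on_continuous[OF open_UNIV f_convex[OF \<open>i \<in> {1..m}\<close>]]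
      convex_on_continuous[OF open_UNIV h_convex[OF \<open>i \<in> {1..m}\<close>]]
    by (auto intro: continuous_on_tendsto_compose)
qed

lemma neg_grad_in_subdiff:
  assumes "z \<in> solutions"
  shows "- (\<Sum>i\<in>{1..m}. gradh i z) \<in> subdiff (\<lambda>y. (\<Sum>i\<in>{1..m}. ereal (f i y)) + indicator_fun A y) z"
proof -
  have z: "z \<in> A" "\<And>y. y \<in> A \<Longrightarrow> (\<Sum>i\<in>{1..m}. f i z) + (\<Sum>i\<in>{1..m}. h i z)
      \<le> (\<Sum>i\<in>{1..m}. f i y) + (\<Sum>i\<in>{1..m}. h i y)"
    using assms by (auto simp: solutions_def F_def sum.distrib)
  have grad: "GDERIV (\<lambda>y. \<Sum>i\<in>{1..m}. h i y) z :> (\<Sum>i\<in>{1..m}. gradh i z)"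
    using h_grad unfolding gderiv_def inner_sum_right by (intro has_derivative_sum) auto
  have conv: "convex_on A (\<lambda>y. \<Sum>i\<in>{1..m}. f i y)"
    by (intro convex_on_sum_fun convex_argmin convex_on_subset[OF f_convex]) auto
  have var: "(\<Sum>i\<in>{1..m}. f i z) + inner (- (\<Sum>i\<in>{1..m}. gradh i z)) (y - z)
      \<le> (\<Sum>i\<in>{1..m}. f i y)" if "y \<in> A" for y
    using min_convex_plus_smooth_imp_variational_ineq[OF convex_argmin conv grad z(1) z(2) that]
    by simp
  show ?thesis
    unfolding subdiff_def
  proof (intro CollectI conjI allI)
    show "(\<Sum>i\<in>{1..m}. ereal (f i z)) + indicator_fun A z \<noteq> \<infinity>"
      using z(1) by (simp add: indicator_fun_def)
    show "(\<Sum>i\<in>{1..m}. ereal (f i z)) + indicator_fun A z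
        + ereal (inner (- (\<Sum>i\<in>{1..m}. gradh i z)) (y - z))
        \<le> (\<Sum>i\<in>{1..m}. ereal (f i y)) + indicator_fun A y" for y
      using var[of y] z(1) by (cases "y \<in> A") (simp_all add: indicator_fun_def)
  qed
qed

end

section \<open>Convergence\<close>

locale penalty_forward_backward_convergence = penalty_forward_backward +
  assumes S_nonempty:
      "{z \<in> argmin_set g. \<forall>y \<in> argmin_set g.
          (\<Sum>i\<in>{1..m}. f i z + h i z) \<le> (\<Sum>i\<in>{1..m}. f i y + h i y)} \<noteq> {}"
    and H1: "\<And>y. subdiff (\<lambda>z. (\<Sum>i\<in>{1..m}. ereal (f i z)) + indicator_fun (argmin_set g) z) y
        = {(\<Sum>i\<in>{1..m}. u i) + p | u p. (\<forall>i\<in>{1..m}. u i \<in> subdiff (\<lambda>z. ereal (f i z)) y)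
              \<and> p \<in> normal_cone (argmin_set g) y}"
    and H2: "\<not> summable (\<lambda>k. \<alpha> (k + 1))" "summable (\<lambda>k. (\<alpha> (k + 1))\<^sup>2)"
    and H3: "0 < liminf (\<lambda>k. ereal (\<alpha> k * \<beta> k))"
            "limsup (\<lambda>k. ereal (\<alpha> k * \<beta> k)) < ereal (2 / Lg)"
    and H4: "\<And>p. p \<in> normal_cone_range (argmin_set g) \<Longrightarrow>
        (\<Sum>k. ereal (\<alpha> (k + 1) * \<beta> (k + 1)) *
            (fenchel_conj g (p /\<^sub>R \<beta> (k + 1)) - support_fun (argmin_set g) (p /\<^sub>R \<beta> (k + 1)))) < \<infinity>"
begin

lemma \<alpha>_tendsto_0: "\<alpha> \<longlonglongrightarrow> 0"
proof -
  have "(\<lambda>k. sqrt ((\<alpha> (k + 1))\<^sup>2)) \<longlonglongrightarrow> sqrt 0"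
    by (intro tendsto_real_sqrt summable_LIMSEQ_zero[OF H2(2)])
  then have "(\<lambda>k. \<alpha> (k + 1)) \<longlonglongrightarrow> 0"
    by (simp add: tendsto_rabs_zero_iff)
  then show ?thesis
    by (rule LIMSEQ_offset)
qed

lemma step_size_constants:
  obtains \<theta> \<gamma>0 K where "0 < \<theta>" "\<theta> \<le> 1" "0 < \<gamma>0" "K \<ge> 1"
    and "\<And>k. k \<ge> K \<Longrightarrow> \<gamma> k \<le> 2 * (1 - \<theta>) / Lg \<and> \<gamma>0 \<le> \<gamma> k \<and> \<alpha> k * Lsum \<le> 1 / 4"
proof -
  obtain c where c: "limsup (\<lambda>k. ereal (\<gamma> k)) < ereal c" "c < 2 / Lg"
    using ereal_dense2[OF H3(2)] by (auto simp: \<gamma>_def)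
  obtain \<gamma>0 where \<gamma>0: "0 < \<gamma>0" "ereal \<gamma>0 < liminf (\<lambda>k. ereal (\<gamma> k))"
    using ereal_dense2[OF H3(1)] by (auto simp: \<gamma>_def)
  have "\<forall>\<^sub>F k in sequentially. \<alpha> k * Lsum < 1 / 4"
    by (rule order_tendstoD(2)[OF tendsto_mult_left_zero[OF \<alpha>_tendsto_0]]) simp
  then have "\<forall>\<^sub>F k in sequentially. \<gamma> k < c \<and> \<gamma>0 < \<gamma> k \<and> \<alpha> k * Lsum < 1 / 4"
    using Limsup_lessD[OF c(1)] less_LiminfD[OF \<gamma>0(2)] by eventually_elim auto
  then obtain K where K: "\<And>k. k \<ge> K \<Longrightarrow> \<gamma> k < c \<and> \<gamma>0 < \<gamma> k \<and> \<alpha> k * Lsum < 1 / 4"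
    unfolding eventually_sequentially by blast
  define \<theta> where "\<theta> = min 1 (1 - c * Lg / 2)"
  have "c * Lg < 2"
    using c(2) g_lip(1) by (simp add: field_simps)
  then have "0 < \<theta>" "\<theta> \<le> 1"
    by (auto simp: \<theta>_def)
  have "\<theta> \<le> 1 - c * Lg / 2"
    by (simp add: \<theta>_def)
  then have "c \<le> 2 * (1 - \<theta>) / Lg"
    using g_lip(1) by (simp add: field_simps)
  then show ?thesis
    using K \<gamma>0(1) \<open>0 < \<theta>\<close> \<open>\<theta> \<le> 1\<close> by (intro that[of \<theta> \<gamma>0 "max K 1"]) force+
qed

lemma solution_multipliers:
  assumes "z \<in> solutions"
  obtains c p where "\<And>i y. i \<in> {1..m} \<Longrightarrow> f i z + h i z + inner (c i) (y - z) \<le> f i y + h i y"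
    and "p \<in> normal_cone A z" and "(\<Sum>i\<in>{1..m}. c i) = - p"
proof -
  obtain u p where up: "- (\<Sum>i\<in>{1..m}. gradh i z) = (\<Sum>i\<in>{1..m}. u i) + p"
    "\<And>i. i \<in> {1..m} \<Longrightarrow> u i \<in> subdiff (\<lambda>y. ereal (f i y)) z" "p \<in> normal_cone A z"
    using neg_grad_in_subdiff[OF assms] unfolding H1 by blast
  show ?thesis
  proof (rule that[of "\<lambda>i. u i + gradh i z" p])
    fix i y assume "i \<in> {1..m}"
    then have "f i z + inner (u i) (y - z) \<le> f i y" "h i z + inner (gradh i z) (y - z) \<le> h i y"
      using up(2) convex_on_gderiv_tangent_le[OF h_convex h_grad] by (auto simp: subdiff_def)
    then show "f i z + h i z + inner (u i + gradh i z) (y - z) \<le> f i y + h i y"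
      by (simp add: inner_add_left)
  next
    have "(\<Sum>i\<in>{1..m}. u i + gradh i z) = ((\<Sum>i\<in>{1..m}. u i) + p) + (\<Sum>i\<in>{1..m}. gradh i z) - p"
      by (simp add: sum.distrib)
    also have "\<dots> = - p"
      unfolding up(1)[symmetric] by simp
    finally show "(\<Sum>i\<in>{1..m}. u i + gradh i z) = - p" .
  qed (use up(3) in simp)
qed

lemma normal_cone_error_summable:
  assumes q: "q \<in> normal_cone A z"
  obtains t where "\<And>k. k \<ge> 1 \<Longrightarrow> 0 \<le> t k"
    and "\<And>k y. k \<ge> 1 \<Longrightarrow> inner (q /\<^sub>R \<beta> k) (y - z) - g y \<le> t k"
    and "summable (\<lambda>k. \<gamma> k * t k)"
proof -
  define T where "T k = fenchel_conj g (q /\<^sub>R \<beta> k) - support_fun A (q /\<^sub>R \<beta> k)" for k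
  define t where "t k = real_of_ereal (T k)" for k
  have "z \<in> A"
    using q by (simp add: normal_cone_def split: if_splits)
  have lower: "ereal (inner (q /\<^sub>R \<beta> k) (y - z) - g y) \<le> T k" if "k \<ge> 1" for k y
    unfolding T_def using \<beta>_pos[OF that]
    by (intro fenchel_conj_minus_support_fun_ge normal_cone_scaleR[OF q]) simp
  have T_nonneg: "0 \<le> T k" if "k \<ge> 1" for k
    using lower[OF that, of z] \<open>z \<in> A\<close> by (simp add: argmin_iff zero_ereal_def)
  have sum_finite: "(\<Sum>k. ereal (\<gamma> (k + 1)) * T (k + 1)) \<noteq> \<infinity>"
    using H4[of q] q \<open>z \<in> A\<close> by (auto simp: normal_cone_range_def T_def \<gamma>_def)
  have pos: "0 < \<gamma> (k + 1)" "0 \<le> T (k + 1)" for k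
    using \<gamma>_pos T_nonneg by simp_all
  note weighted = summable_of_weighted_ereal_suminf[of "\<lambda>k. \<gamma> (k + 1)" "\<lambda>k. T (k + 1)",
      OF pos(1) pos(2) sum_finite]
  have T_finite: "T (k + 1) = ereal (t (k + 1))" for k
    using weighted(1) by (simp add: t_def)
  have summable: "summable (\<lambda>k. \<gamma> (k + 1) * t (k + 1))"
    using weighted(2) by (simp add: t_def)
  have T_eq: "T k = ereal (t k)" if "k \<ge> 1" for k
    using T_finite[of "k - 1"] that by simp
  show ?thesis
  proof (rule that[of t])
    show "0 \<le> t k" "inner (q /\<^sub>R \<beta> k) (y - z) - g y \<le> t k" if "k \<ge> 1" for k y
      using T_nonneg[OF that] lower[OF that, of y] by (simp_all add: T_eq[OF that])
    from summable show "summable (\<lambda>k. \<gamma> k * t k)"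
      by (rule summable_iff_shift[THEN iffD1])
  qed
qed

lemma gap_error_summable:
  assumes "z \<in> solutions" "0 < \<theta>"
  obtains \<epsilon> where "summable \<epsilon>" "\<And>k. k \<ge> 1 \<Longrightarrow> 0 \<le> \<epsilon> k"
    and "\<And>k. k \<ge> 1 \<Longrightarrow> 0 \<le> \<gamma> k * \<theta> * g (x k) + 2 * \<alpha> k * (F_stage k - F z) + \<theta> / 4 * D k + \<epsilon> k"
proof -
  obtain c p where c: "\<And>i y. i \<in> {1..m} \<Longrightarrow> f i z + h i z + inner (c i) (y - z) \<le> f i y + h i y"
    and p: "p \<in> normal_cone A z" "(\<Sum>i\<in>{1..m}. c i) = - p"
    using solution_multipliers[OF assms(1)] by blast
  have q: "(2 / \<theta>) *\<^sub>R p \<in> normal_cone A z"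
    using normal_cone_scaleR[OF p(1)] assms(2) by simp
  obtain t where t: "\<And>k. k \<ge> 1 \<Longrightarrow> 0 \<le> t k"
    "\<And>k y. k \<ge> 1 \<Longrightarrow> inner (((2 / \<theta>) *\<^sub>R p) /\<^sub>R \<beta> k) (y - z) - g y \<le> t k"
    and "summable (\<lambda>k. \<gamma> k * t k)"
    using normal_cone_error_summable[OF q] by blast
  define C where "C = 4 * m * (m + 1) * (\<Sum>i\<in>{1..m}. (norm (c i))\<^sup>2) / \<theta>"
  define \<epsilon> where "\<epsilon> k = \<theta> * (\<gamma> k * t k) + C * (\<alpha> k)\<^sup>2" for k
  have "summable (\<lambda>k. (\<alpha> k)\<^sup>2)"
    using summable_iff_shift[of "\<lambda>k. (\<alpha> k)\<^sup>2" 1] H2(2) by simp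
  show ?thesis
  proof (rule that[of \<epsilon>])
    show "summable \<epsilon>"
      unfolding \<epsilon>_def using \<open>summable (\<lambda>k. \<gamma> k * t k)\<close> \<open>summable (\<lambda>k. (\<alpha> k)\<^sup>2)\<close>
      by (intro summable_add summable_mult summable_mult2)
    fix k :: nat
    assume "k \<ge> 1"
    have "0 \<le> C"
      unfolding C_def using assms(2) by (simp add: sum_nonneg)
    then show "0 \<le> \<epsilon> k"
      unfolding \<epsilon>_def using \<gamma>_pos[OF \<open>k \<ge> 1\<close>] t(1)[OF \<open>k \<ge> 1\<close>] assms(2) by simp
    show "0 \<le> \<gamma> k * \<theta> * g (x k) + 2 * \<alpha> k * (F_stage k - F z) + \<theta> / 4 * D k + \<epsilon> k"
      using gap_lower_bound[OF \<open>k \<ge> 1\<close> assms(2) c p(2) t(2)[OF \<open>k \<ge> 1\<close>]]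
      by (simp add: \<epsilon>_def C_def ac_simps)
  qed
qed

lemma fejer_inequalities:
  assumes "z \<in> solutions"
  obtains \<theta> \<gamma>0 \<epsilon> K where "0 < \<theta>" "0 < \<gamma>0" "summable \<epsilon>" "K \<ge> 1"
    and "\<And>k. k \<ge> K \<Longrightarrow> 0 \<le> \<epsilon> k \<and> \<gamma>0 \<le> \<gamma> k"
    and "\<And>k. k \<ge> K \<Longrightarrow> (norm (x (k + 1) - z))\<^sup>2 \<le> (norm (x k - z))\<^sup>2 - 2 * \<gamma> k * \<theta> * g (x k)
      - 2 * \<alpha> k * (F_stage k - F z) - \<theta> / 2 * D k"
    and "\<And>k. k \<ge> K \<Longrightarrow> 0 \<le> \<gamma> k * \<theta> * g (x k) + 2 * \<alpha> k * (F_stage k - F z) + \<theta> / 4 * D k + \<epsilon> k"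
proof -
  obtain \<theta> \<gamma>0 K where \<theta>: "0 < \<theta>" "\<theta> \<le> 1" and "0 < \<gamma>0" "K \<ge> 1"
    and K: "\<And>k. k \<ge> K \<Longrightarrow> \<gamma> k \<le> 2 * (1 - \<theta>) / Lg \<and> \<gamma>0 \<le> \<gamma> k \<and> \<alpha> k * Lsum \<le> 1 / 4"
    using step_size_constants by blast
  obtain \<epsilon> where "summable \<epsilon>" and \<epsilon>: "\<And>k. k \<ge> 1 \<Longrightarrow> 0 \<le> \<epsilon> k"
    and gap: "\<And>k. k \<ge> 1 \<Longrightarrow> 0 \<le> \<gamma> k * \<theta> * g (x k) + 2 * \<alpha> k * (F_stage k - F z) + \<theta> / 4 * D k + \<epsilon> k"
    using gap_error_summable[OF assms \<theta>(1)] by blast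
  show ?thesis
  proof (rule that[of \<theta> \<gamma>0 \<epsilon> K])
    fix k assume "k \<ge> K"
    then have "k \<ge> 1"
      using \<open>K \<ge> 1\<close> by simp
    show "0 \<le> \<epsilon> k \<and> \<gamma>0 \<le> \<gamma> k"
      using \<epsilon>[OF \<open>k \<ge> 1\<close>] K[OF \<open>k \<ge> K\<close>] by simp
    show "(norm (x (k + 1) - z))\<^sup>2 \<le> (norm (x k - z))\<^sup>2 - 2 * \<gamma> k * \<theta> * g (x k)
        - 2 * \<alpha> k * (F_stage k - F z) - \<theta> / 2 * D k"
      using assms K[OF \<open>k \<ge> K\<close>] \<theta> by (intro iteration_dist_le \<open>k \<ge> 1\<close>) (auto simp: solutions_def)
    show "0 \<le> \<gamma> k * \<theta> * g (x k) + 2 * \<alpha> k * (F_stage k - F z) + \<theta> / 4 * D k + \<epsilon> k"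
      by (rule gap[OF \<open>k \<ge> 1\<close>])
  qed (fact+)
qed

lemma fejer_summable:
  assumes "z \<in> solutions"
  obtains \<theta> \<gamma>0 K c where "0 < \<theta>" "0 < \<gamma>0" "K \<ge> 1"
    and "convergent (\<lambda>k. (norm (x k - z))\<^sup>2)" "summable c"
    and "\<And>k. k \<ge> K \<Longrightarrow> \<gamma>0 * \<theta> * g (x k) \<le> c k \<and> \<theta> / 4 * D k \<le> c k
      \<and> 2 * \<alpha> k * (F_stage k - F z) \<le> c k"
proof -
  obtain \<theta> \<gamma>0 \<epsilon> K where "0 < \<theta>" "0 < \<gamma>0" "summable \<epsilon>" "K \<ge> 1"
    and K: "\<And>k. k \<ge> K \<Longrightarrow> 0 \<le> \<epsilon> k \<and> \<gamma>0 \<le> \<gamma> k"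
    and fejer: "\<And>k. k \<ge> K \<Longrightarrow> (norm (x (k + 1) - z))\<^sup>2 \<le> (norm (x k - z))\<^sup>2 - 2 * \<gamma> k * \<theta> * g (x k)
      - 2 * \<alpha> k * (F_stage k - F z) - \<theta> / 2 * D k"
    and gap: "\<And>k. k \<ge> K \<Longrightarrow> 0 \<le> \<gamma> k * \<theta> * g (x k) + 2 * \<alpha> k * (F_stage k - F z) + \<theta> / 4 * D k + \<epsilon> k"
    using fejer_inequalities[OF assms] by blast
  define c where
    "c k = 2 * \<gamma> k * \<theta> * g (x k) + 2 * \<alpha> k * (F_stage k - F z) + \<theta> / 2 * D k + \<epsilon> k" for k
  have bounds: "0 \<le> \<gamma>0 * \<theta> * g (x k)" "\<gamma>0 * \<theta> * g (x k) \<le> \<gamma> k * \<theta> * g (x k)" "0 \<le> \<theta> / 4 * D k"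
    "0 \<le> \<epsilon> k" if "k \<ge> K" for k
    using K[OF that] \<open>0 < \<theta>\<close> \<open>0 < \<gamma>0\<close> g_nonneg[of "x k"] D_nonneg[of k]
    by (auto intro!: mult_right_mono)
  have step: "(norm (x (Suc k) - z))\<^sup>2 \<le> (norm (x k - z))\<^sup>2 - c k + \<epsilon> k" if "k \<ge> K" for k
    using fejer[OF that] by (simp add: c_def)
  have c_nonneg: "0 \<le> c k" if "k \<ge> K" for k
    unfolding c_def using gap[OF that] bounds[OF that] by linarith
  have "convergent (\<lambda>k. (norm (x k - z))\<^sup>2)" "summable c"
    using quasi_fejer_eventually[of K "\<lambda>k. (norm (x k - z))\<^sup>2" c \<epsilon>, OF _ c_nonneg bounds(4)
        \<open>summable \<epsilon>\<close> step] by simp_all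
  moreover have "\<gamma>0 * \<theta> * g (x k) \<le> c k \<and> \<theta> / 4 * D k \<le> c k \<and> 2 * \<alpha> k * (F_stage k - F z) \<le> c k"
    if "k \<ge> K" for k
    unfolding c_def using gap[OF that] bounds[OF that] by linarith
  ultimately show ?thesis
    using that \<open>0 < \<theta>\<close> \<open>0 < \<gamma>0\<close> \<open>K \<ge> 1\<close> by blast
qed

lemma fejer_consequences:
  assumes "z \<in> solutions"
  shows "convergent (\<lambda>k. norm (x k - z))" "summable (\<lambda>k. g (x k))" "summable D"
    and "liminf (\<lambda>k. ereal (F_stage k)) \<le> ereal (F z)"
proof -
  obtain \<theta> \<gamma>0 K c where "0 < \<theta>" "0 < \<gamma>0" "K \<ge> 1"
    and conv: "convergent (\<lambda>k. (norm (x k - z))\<^sup>2)" and "summable c"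
    and bound: "\<And>k. k \<ge> K \<Longrightarrow> \<gamma>0 * \<theta> * g (x k) \<le> c k \<and> \<theta> / 4 * D k \<le> c k
      \<and> 2 * \<alpha> k * (F_stage k - F z) \<le> c k"
    using fejer_summable[OF assms] by blast
  from conv obtain l where "(\<lambda>k. (norm (x k - z))\<^sup>2) \<longlonglongrightarrow> l"
    unfolding convergent_def by blast
  then have "(\<lambda>k. sqrt ((norm (x k - z))\<^sup>2)) \<longlonglongrightarrow> sqrt l"
    by (rule tendsto_real_sqrt)
  then show "convergent (\<lambda>k. norm (x k - z))"
    unfolding convergent_def by auto
  have "norm (g (x k)) \<le> c k / (\<gamma>0 * \<theta>)" if "k \<ge> K" for k
    using bound[OF that] g_nonneg[of "x k"] \<open>0 < \<theta>\<close> \<open>0 < \<gamma>0\<close>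
    by (simp add: pos_le_divide_eq ac_simps)
  then show "summable (\<lambda>k. g (x k))"
    by (rule summable_comparison_test'[OF summable_divide[OF \<open>summable c\<close>]])
  have "norm (D k) \<le> c k / (\<theta> / 4)" if "k \<ge> K" for k
    using bound[OF that] \<open>0 < \<theta>\<close> D_nonneg[of k] by (simp add: pos_le_divide_eq ac_simps)
  then show "summable D"
    by (rule summable_comparison_test'[OF summable_divide[OF \<open>summable c\<close>]])
  have "\<not> summable \<alpha>"
    using H2(1) summable_iff_shift[of \<alpha> 1] by simp
  moreover have "\<alpha> k * (F_stage k - F z) \<le> c k / 2" "0 \<le> \<alpha> k" if "k \<ge> K" for k
    using bound[OF that] \<alpha>_pos[of k] \<open>K \<ge> 1\<close> that by auto
  ultimately show "liminf (\<lambda>k. ereal (F_stage k)) \<le> ereal (F z)"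
    by (intro liminf_le_if_weighted_summable[OF summable_divide[OF \<open>summable c\<close>]])
qed

lemma solutions_nonempty: "solutions \<noteq> {}"
  using S_nonempty unfolding solutions_def F_def .

lemma bounded_iterates: "bounded (range x)"
proof -
  obtain z where z: "z \<in> solutions"
    using solutions_nonempty by blast
  obtain B where B: "\<And>k. norm (x k - z) \<le> B"
    using convergent_imp_Bseq[OF fejer_consequences(1)[OF z]] unfolding Bseq_def by auto
  have "norm (x k) \<le> norm z + B" for k
    using norm_triangle_sub[of "x k" z] B[of k] by simp
  then show ?thesis
    unfolding bounded_iff by blast
qed

lemma solution_cluster_point:
  obtains z s where "z \<in> solutions" "strict_mono s" "(x \<circ> s) \<longlonglongrightarrow> z"
proof -
  obtain z0 where z0: "z0 \<in> solutions"
    using solutions_nonempty by blast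
  obtain r where r: "strict_mono r"
    "((\<lambda>k. ereal (F_stage k)) \<circ> r) \<longlonglongrightarrow> liminf (\<lambda>k. ereal (F_stage k))"
    using liminf_subseq_lim by blast
  have "bounded (range (x \<circ> r))"
    using bounded_iterates by (rule bounded_subset) auto
  then obtain z r' where r': "strict_mono r'" "((x \<circ> r) \<circ> r') \<longlonglongrightarrow> z"
    using bounded_imp_convergent_subsequence by blast
  define s where "s = r \<circ> r'"
  have s: "strict_mono s" "(x \<circ> s) \<longlonglongrightarrow> z"
    using r(1) r' unfolding s_def by (auto intro: strict_mono_o simp: o_assoc)
  have "(\<lambda>j. g (x (s j))) \<longlonglongrightarrow> 0"
    using LIMSEQ_subseq_LIMSEQ[OF summable_LIMSEQ_zero[OF fejer_consequences(2)[OF z0]] s(1)]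
    by (simp add: o_def)
  moreover have "(\<lambda>j. g (x (s j))) \<longlonglongrightarrow> g z"
    using s(2) convex_on_continuous[OF open_UNIV g_convex]
    by (auto intro: continuous_on_tendsto_compose simp: o_def)
  ultimately have "z \<in> A"
    using LIMSEQ_unique argmin_iff by metis
  have "(\<lambda>j. ereal (F_stage (s j))) \<longlonglongrightarrow> ereal (F z)"
    using F_stage_subseq_tendsto[OF fejer_consequences(3)[OF z0] s] by (rule tendsto_ereal)
  moreover have "(\<lambda>j. ereal (F_stage (s j))) \<longlonglongrightarrow> liminf (\<lambda>k. ereal (F_stage k))"
    using LIMSEQ_subseq_LIMSEQ[OF r(2) r'(1)] by (simp add: s_def o_def)
  ultimately have "ereal (F z) \<le> ereal (F z0)"
    using LIMSEQ_unique fejer_consequences(4)[OF z0] by metis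
  then have "z \<in> solutions"
    using z0 \<open>z \<in> A\<close> by (auto simp: solutions_def)
  then show ?thesis
    using s that by blast
qed

lemma iterates_converge_to_solution: "\<exists>z \<in> solutions. x \<longlonglongrightarrow> z"
proof -
  obtain z s where "z \<in> solutions" "strict_mono s" "(x \<circ> s) \<longlonglongrightarrow> z"
    by (rule solution_cluster_point)
  moreover have "convergent (\<lambda>k. dist (x k) z)"
    using fejer_consequences(1)[OF \<open>z \<in> solutions\<close>] by (simp add: dist_norm)
  ultimately show ?thesis
    using LIMSEQ_if_convergent_dist_and_subseq by blast
qed

end

theorem theorem2p1:
  fixes m :: nat
    and f h :: "nat \<Rightarrow> 'a::euclidean_space \<Rightarrow> real"
    and gradh :: "nat \<Rightarrow> 'a \<Rightarrow> 'a"
    and L :: "nat \<Rightarrow> real"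
    and g :: "'a \<Rightarrow> real" and gradg :: "'a \<Rightarrow> 'a" and Lg :: real
    and \<alpha> \<beta> :: "nat \<Rightarrow> real"
    and x :: "nat \<Rightarrow> 'a"
    and \<phi> :: "nat \<Rightarrow> nat \<Rightarrow> 'a"
  assumes m: "m \<ge> 1"
    and f_convex: "\<And>i. i \<in> {1..m} \<Longrightarrow> convex_on UNIV (f i)"
    and h_convex: "\<And>i. i \<in> {1..m} \<Longrightarrow> convex_on UNIV (h i)"
    and h_grad: "\<And>i y. i \<in> {1..m} \<Longrightarrow> GDERIV (h i) y :> gradh i y"
    and h_lip: "\<And>i. i \<in> {1..m} \<Longrightarrow> L i > 0 \<and> (L i)-lipschitz_on UNIV (gradh i)"
    and g_convex: "convex_on UNIV g"
    and g_grad: "\<And>y. GDERIV g y :> gradg y"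
    and g_lip: "Lg > 0" "Lg-lipschitz_on UNIV gradg"
    and g_min: "(\<exists>y. g y = 0) \<and> (\<forall>y. 0 \<le> g y)"
    and S_nonempty:
      "{z \<in> argmin_set g. \<forall>y \<in> argmin_set g.
          (\<Sum>i\<in>{1..m}. f i z + h i z) \<le> (\<Sum>i\<in>{1..m}. f i y + h i y)} \<noteq> {}"
    and \<alpha>_pos: "\<And>k. k \<ge> 1 \<Longrightarrow> \<alpha> k > 0"
    and \<beta>_pos: "\<And>k. k \<ge> 1 \<Longrightarrow> \<beta> k > 0"
    and phi_1: "\<And>k. k \<ge> 1 \<Longrightarrow> \<phi> 1 k = x k - (\<alpha> k * \<beta> k) *\<^sub>R gradg (x k)"
    and phi_step: "\<And>i k. k \<ge> 1 \<Longrightarrow> i \<in> {1..m} \<Longrightarrow>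
        \<phi> (i + 1) k = prox (\<alpha> k) (f i) (\<phi> i k - \<alpha> k *\<^sub>R gradh i (\<phi> i k))"
    and x_step: "\<And>k. k \<ge> 1 \<Longrightarrow> x (k + 1) = \<phi> (m + 1) k"
    and H1: "\<And>y. subdiff (\<lambda>z. (\<Sum>i\<in>{1..m}. ereal (f i z)) + indicator_fun (argmin_set g) z) y
        = {(\<Sum>i\<in>{1..m}. u i) + p | u p. (\<forall>i\<in>{1..m}. u i \<in> subdiff (\<lambda>z. ereal (f i z)) y)
              \<and> p \<in> normal_cone (argmin_set g) y}"
    and H2: "\<not> summable (\<lambda>k. \<alpha> (k + 1))" "summable (\<lambda>k. (\<alpha> (k + 1))\<^sup>2)"
    and H3: "0 < liminf (\<lambda>k. ereal (\<alpha> k * \<beta> k))"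
            "limsup (\<lambda>k. ereal (\<alpha> k * \<beta> k)) < ereal (2 / Lg)"
    and H4: "\<And>p. p \<in> normal_cone_range (argmin_set g) \<Longrightarrow>
        (\<Sum>k. ereal (\<alpha> (k + 1) * \<beta> (k + 1)) *
            (fenchel_conj g (p /\<^sub>R \<beta> (k + 1)) - support_fun (argmin_set g) (p /\<^sub>R \<beta> (k + 1)))) < \<infinity>"
  shows "\<exists>z \<in> {z \<in> argmin_set g. \<forall>y \<in> argmin_set g.
          (\<Sum>i\<in>{1..m}. f i z + h i z) \<le> (\<Sum>i\<in>{1..m}. f i y + h i y)}. x \<longlonglongrightarrow> z"
proof -
  interpret penalty_forward_backward_convergence m f h gradh L g gradg Lg \<alpha> \<beta> x \<phi>
    by unfold_locales fact+
  from iterates_converge_to_solution show ?thesis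
    unfolding solutions_def F_def .
qed

end
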